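(* Let $(X,d)$ be a metric space, let $x_0\in X$ and $r\ge 0$, and let $C_{x_0,r}=\{x\in X: d(x_0,x)=r\}$. Define $\varphi:X\to[0,\infty)$ by $\varphi(x)=d(x,x_0)$ for all $x\in X$. If a self-mapping $T:X\to X$ satisfies $$d(x,Tx)\le \frac{\varphi(x)-\varphi(Tx)}{h}$$ for all $x\in X$ and some $h>1$, then $T=I_X$ (the identity map of $X$) and $C_{x_0,r}$ is a fixed circle of $T$.
   Context: For a metric space $(X,d)$, the circle with center $x_0\in X$ and radius $r$ is $C_{x_0,r}=\{x\in X: d(x_0,x)=r\}$. For a self-mapping $T:X\to X$, the circle $C_{x_0,r}$ is called a fixed circle of $T$ if $Tx=x$ for every $x\in C_{x_0,r}$. $I_X$ denotes the identity map $I_X(x)=x$. *)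

theory Defs
  imports "HOL-Analysis.Analysis"
begin

definition circle :: "'a::metric_space \<Rightarrow> real \<Rightarrow> 'a set" where
  "circle x0 r = {x. dist x0 x = r}"

definition fixed_circle :: "('a::metric_space \<Rightarrow> 'a) \<Rightarrow> 'a \<Rightarrow> real \<Rightarrow> bool" where
  "fixed_circle T x0 r \<longleftrightarrow> (\<forall>x\<in>circle x0 r. T x = x)"

end

theory Submission
  imports Defs
begin

text \<open>By the triangle inequality \<open>\<phi> x - \<phi> (T x) \<le> d(x, T x)\<close>, so the hypothesis gives
  \<open>h \<cdot> d(x, T x) \<le> d(x, T x)\<close>, which forces \<open>d(x, T x) = 0\<close> as soon as \<open>h > 1\<close>.\<close>

lemma eq_if_dist_le_radial_decrease:
  fixes x y x0 :: "'a::metric_space" and h :: real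
  assumes "h > 1"
    and "dist x y \<le> (dist x x0 - dist y x0) / h"
  shows "y = x"
proof -
  have "h * dist x y \<le> dist x x0 - dist y x0"
    using assms by (simp add: pos_le_divide_eq mult.commute)
  also have "\<dots> \<le> dist x y"
    using dist_triangle[of x x0 y] by (simp add: dist_commute)
  finally have "(h - 1) * dist x y \<le> 0"
    by (simp add: algebra_simps)
  with \<open>h > 1\<close> show ?thesis
    by (simp add: mult_le_0_iff)
qed

lemma fixed_circle_id: "fixed_circle id x0 r"
  by (simp add: fixed_circle_def)

theorem theorem2p21:
  fixes T :: "'a::metric_space \<Rightarrow> 'a" and x0 :: 'a and r h :: real
    and \<phi> :: "'a \<Rightarrow> real"
  assumes "r \<ge> 0"
    and "\<And>x. \<phi> x = dist x x0"
    and "h > 1"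
    and "\<And>x. dist x (T x) \<le> (\<phi> x - \<phi> (T x)) / h"
  shows "T = id \<and> fixed_circle T x0 r"
proof -
  have "T x = x" for x
    using eq_if_dist_le_radial_decrease[OF \<open>h > 1\<close>] assms(2,4) by metis
  then have "T = id"
    by auto
  then show ?thesis
    using fixed_circle_id by simp
qed

end
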